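(* Let $\Sigma$ be a finite alphabet. A language $L\subseteq\Sigma^*$ is regular in the classical sense if and only if the set $\{\triangleleft\, w\,\triangleright \mid w\in L\}$ is the language of arrows recognized by some nondeterministic finite-state automaton over the category $\mathcal{F}(\mathrm{Br}(\Sigma))$.
   Context: $\mathrm{Br}(\Sigma)$ is the graph with three nodes $\bot,*,\top$, a loop $a:*\to *$ for each $a\in\Sigma$, an edge $\triangleleft:\bot\to *$ and an edge $\triangleright:*\to\top$; $\mathcal{F}(\mathrm{Br}(\Sigma))$ is the free category it generates (objects are nodes, arrows are finite paths), so the arrows $\bot\to\top$ are exactly the paths $\triangleleft\, w\,\triangleright$ for $w\in\Sigma^*$. Composition is written diagrammatically. A functor $p:\mathcal{D}\to\mathcal{C}$ is ULF if for every arrow $\alpha$ of $\mathcal{D}$ and arrows $u,v$ of $\mathcal{C}$ with $p(\alpha)=uv$ there is a unique pair $\beta,\gamma$ with $\alpha=\beta\gamma$, $p(\beta)=u$, $p(\gamma)=v$; it is finitary if $p^{-1}(A)$ and $p^{-1}(w)$ are finite for every object $A$ and arrow $w$ of $\mathcal{C}$. A nondeterministic finite-state automaton over a category $\mathcal{C}$ is a tuple $M=(\mathcal{C},\mathcal{Q},p,q_0,q_f)$ with $p:\mathcal{Q}\to\mathcal{C}$ a finitary ULF functor and $q_0,q_f$ objects of $\mathcal{Q}$; the language of arrows it recognizes is $\{p(\alpha)\mid \alpha:q_0\to q_f \text{ in } \mathcal{Q}\}\subseteq \mathcal{C}(p(q_0),p(q_f))$. "Regular in the classical sense" means recognized by a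 classical nondeterministic finite automaton over $\Sigma$ (finite set of states, finite set of labelled transitions, a set of initial states and a set of accepting states, no $\epsilon$-transitions). *)

theory Defs
  imports Main
begin

record ('o,'m) cat =
  Obj  :: "'o set"
  Arr  :: "'m set"
  Dom  :: "'m \<Rightarrow> 'o"
  Cod  :: "'m \<Rightarrow> 'o"
  Ident :: "'o \<Rightarrow> 'm"
  Comp :: "'m \<Rightarrow> 'm \<Rightarrow> 'm"   (* Comp f g = f ; g, defined when Cod f = Dom g *)

definition is_category :: "('o,'m) cat \<Rightarrow> bool" where
  "is_category C \<longleftrightarrow>
     (\<forall>f\<in>Arr C. Dom C f \<in> Obj C \<and> Cod C f \<in> Obj C) \<and>
     (\<forall>A\<in>Obj C. Ident C A \<in> Arr C \<and> Dom C (Ident C A) = A \<and> Cod C (Ident C A) = A) \<and>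
     (\<forall>f\<in>Arr C. \<forall>g\<in>Arr C. Cod C f = Dom C g \<longrightarrow>
        Comp C f g \<in> Arr C \<and> Dom C (Comp C f g) = Dom C f \<and> Cod C (Comp C f g) = Cod C g) \<and>
     (\<forall>f\<in>Arr C. Comp C (Ident C (Dom C f)) f = f \<and> Comp C f (Ident C (Cod C f)) = f) \<and>
     (\<forall>f\<in>Arr C. \<forall>g\<in>Arr C. \<forall>h\<in>Arr C. Cod C f = Dom C g \<and> Cod C g = Dom C h \<longrightarrow>
        Comp C (Comp C f g) h = Comp C f (Comp C g h))"

record ('o1,'m1,'o2,'m2) cfunctor =
  FObj :: "'o1 \<Rightarrow> 'o2"
  FArr :: "'m1 \<Rightarrow> 'm2"

definition is_functor ::
  "('o1,'m1) cat \<Rightarrow> ('o2,'m2) cat \<Rightarrow> ('o1,'m1,'o2,'m2) cfunctor \<Rightarrow> bool" where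
  "is_functor D C p \<longleftrightarrow>
     (\<forall>A\<in>Obj D. FObj p A \<in> Obj C) \<and>
     (\<forall>f\<in>Arr D. FArr p f \<in> Arr C \<and> Dom C (FArr p f) = FObj p (Dom D f)
                \<and> Cod C (FArr p f) = FObj p (Cod D f)) \<and>
     (\<forall>A\<in>Obj D. FArr p (Ident D A) = Ident C (FObj p A)) \<and>
     (\<forall>f\<in>Arr D. \<forall>g\<in>Arr D. Cod D f = Dom D g \<longrightarrow>
        FArr p (Comp D f g) = Comp C (FArr p f) (FArr p g))"

definition is_ULF ::
  "('o1,'m1) cat \<Rightarrow> ('o2,'m2) cat \<Rightarrow> ('o1,'m1,'o2,'m2) cfunctor \<Rightarrow> bool" where
  "is_ULF D C p \<longleftrightarrow>
     (\<forall>\<alpha>\<in>Arr D. \<forall>u\<in>Arr C. \<forall>v\<in>Arr C.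
        Cod C u = Dom C v \<and> FArr p \<alpha> = Comp C u v \<longrightarrow>
        (\<exists>!(\<beta>,\<gamma>). \<beta> \<in> Arr D \<and> \<gamma> \<in> Arr D \<and> Cod D \<beta> = Dom D \<gamma> \<and>
                  \<alpha> = Comp D \<beta> \<gamma> \<and> FArr p \<beta> = u \<and> FArr p \<gamma> = v))"

definition is_finitary ::
  "('o1,'m1) cat \<Rightarrow> ('o2,'m2) cat \<Rightarrow> ('o1,'m1,'o2,'m2) cfunctor \<Rightarrow> bool" where
  "is_finitary D C p \<longleftrightarrow>
     (\<forall>A\<in>Obj C. finite {q\<in>Obj D. FObj p q = A}) \<and>
     (\<forall>w\<in>Arr C. finite {\<alpha>\<in>Arr D. FArr p \<alpha> = w})"

definition is_cat_NFA ::
  "('o2,'m2) cat \<Rightarrow> ('o1,'m1) cat \<Rightarrow> ('o1,'m1,'o2,'m2) cfunctor \<Rightarrow> 'o1 \<Rightarrow> 'o1 \<Rightarrow> bool" where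
  "is_cat_NFA C Q p q0 qf \<longleftrightarrow>
     is_category C \<and> is_category Q \<and> is_functor Q C p \<and> is_ULF Q C p \<and> is_finitary Q C p \<and>
     q0 \<in> Obj Q \<and> qf \<in> Obj Q"

definition cat_NFA_lang ::
  "('o1,'m1) cat \<Rightarrow> ('o1,'m1,'o2,'m2) cfunctor \<Rightarrow> 'o1 \<Rightarrow> 'o1 \<Rightarrow> 'm2 set" where
  "cat_NFA_lang Q p q0 qf = {FArr p \<alpha> | \<alpha>. \<alpha> \<in> Arr Q \<and> Dom Q \<alpha> = q0 \<and> Cod Q \<alpha> = qf}"

datatype br_node = BrBot | BrStar | BrTop

datatype 'a br_edge = BrLoop 'a | BrOpen | BrClose

fun br_src :: "'a br_edge \<Rightarrow> br_node" where
  "br_src (BrLoop a) = BrStar" | "br_src BrOpen = BrBot" | "br_src BrClose = BrStar"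

fun br_tgt :: "'a br_edge \<Rightarrow> br_node" where
  "br_tgt (BrLoop a) = BrStar" | "br_tgt BrOpen = BrStar" | "br_tgt BrClose = BrTop"

definition br_edges :: "'a set \<Rightarrow> 'a br_edge set" where
  "br_edges \<Sigma> = {BrLoop a | a. a \<in> \<Sigma>} \<union> {BrOpen, BrClose}"

fun br_path :: "'a set \<Rightarrow> br_node \<Rightarrow> 'a br_edge list \<Rightarrow> br_node \<Rightarrow> bool" where
  "br_path \<Sigma> A [] B \<longleftrightarrow> A = B"
| "br_path \<Sigma> A (e # es) B \<longleftrightarrow> e \<in> br_edges \<Sigma> \<and> br_src e = A \<and> br_path \<Sigma> (br_tgt e) es B"

type_synonym 'a br_arrow = "br_node \<times> 'a br_edge list \<times> br_node"

definition FBr :: "'a set \<Rightarrow> (br_node, 'a br_arrow) cat" where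
  "FBr \<Sigma> = \<lparr> Obj = UNIV,
              Arr = {(A, es, B). br_path \<Sigma> A es B},
              Dom = (\<lambda>(A, es, B). A),
              Cod = (\<lambda>(A, es, B). B),
              Ident = (\<lambda>A. (A, [], A)),
              Comp = (\<lambda>(A, es, B) (B', fs, C). (A, es @ fs, C)) \<rparr>"

definition bracket :: "'a list \<Rightarrow> 'a br_arrow" where
  "bracket w = (BrBot, BrOpen # map BrLoop w @ [BrClose], BrTop)"

fun nfa_run :: "('s \<times> 'a \<times> 's) set \<Rightarrow> 's \<Rightarrow> 'a list \<Rightarrow> 's \<Rightarrow> bool" where
  "nfa_run \<delta> q [] q' \<longleftrightarrow> q = q'"
| "nfa_run \<delta> q (a # w) q' \<longleftrightarrow> (\<exists>q''. (q, a, q'') \<in> \<delta> \<and> nfa_run \<delta> q'' w q')"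

definition classical_regular :: "'a set \<Rightarrow> 'a list set \<Rightarrow> bool" where
  "classical_regular \<Sigma> L \<longleftrightarrow>
     (\<exists>(S :: nat set) \<delta> I F. finite S \<and> finite \<delta> \<and> \<delta> \<subseteq> S \<times> \<Sigma> \<times> S \<and> I \<subseteq> S \<and> F \<subseteq> S \<and>
        L = {w. \<exists>i\<in>I. \<exists>f\<in>F. nfa_run \<delta> i w f})"

end

(* A functor p : Q -> F(Br Sigma) is read as a classical automaton whose states are the
   objects over *, whose a-transitions are the arrows over the loop a, and whose initial
   (final) states are the targets (sources) of arrows from q0 (to qf) over the opening
   (closing) bracket.  Unique lifting of factorisations cuts an arrow over <| w |> into such
   one-edge arrows, and composites of them lie over <| w |>, so both automata accept the same
   words; finitariness makes the classical one finite.  Conversely, a classical automaton is a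
   finite graph over Br(Sigma), the functor it induces between free categories is ULF because
   paths factor uniquely, and renaming objects and arrows injectively into nat gives an
   automaton of the required type. *)

theory Submission
  imports Defs "HOL-Library.Countable_Set"
begin

section \<open>Paths in graphs and free categories\<close>

fun graph_path :: "'e set \<Rightarrow> ('e \<Rightarrow> 'v) \<Rightarrow> ('e \<Rightarrow> 'v) \<Rightarrow> 'v \<Rightarrow> 'e list \<Rightarrow> 'v \<Rightarrow> bool" where
  "graph_path E src tgt x [] y \<longleftrightarrow> x = y"
| "graph_path E src tgt x (e # es) y \<longleftrightarrow> e \<in> E \<and> src e = x \<and> graph_path E src tgt (tgt e) es y"

lemma graph_path_append:
  "graph_path E src tgt x (es @ fs) z \<longleftrightarrow>
     (\<exists>y. graph_path E src tgt x es y \<and> graph_path E src tgt y fs z)"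
  by (induction es arbitrary: x) auto

lemma graph_path_target_unique:
  "graph_path E src tgt x es y \<Longrightarrow> graph_path E src tgt x es y' \<Longrightarrow> y = y'"
  by (induction es arbitrary: x) auto

lemma graph_path_edges: "graph_path E src tgt x es y \<Longrightarrow> set es \<subseteq> E"
  by (induction es arbitrary: x) auto

lemma graph_path_target_in:
  "graph_path E src tgt x es y \<Longrightarrow> x \<in> V \<Longrightarrow> \<forall>e\<in>E. tgt e \<in> V \<Longrightarrow> y \<in> V"
  by (induction es arbitrary: x) auto

lemma graph_path_map:
  assumes "\<forall>e\<in>E. fE e \<in> E' \<and> src' (fE e) = fV (src e) \<and> tgt' (fE e) = fV (tgt e)"
  shows "graph_path E src tgt x es y \<Longrightarrow> graph_path E' src' tgt' (fV x) (map fE es) (fV y)"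
  using assms by (induction es arbitrary: x) auto

lemma br_path_eq_graph_path: "br_path \<Sigma> = graph_path (br_edges \<Sigma>) br_src br_tgt"
proof (intro ext)
  show "br_path \<Sigma> A es B = graph_path (br_edges \<Sigma>) br_src br_tgt A es B" for A es B
    by (induction es arbitrary: A) auto
qed

definition free_cat :: "'v set \<Rightarrow> 'e set \<Rightarrow> ('e \<Rightarrow> 'v) \<Rightarrow> ('e \<Rightarrow> 'v) \<Rightarrow> ('v, 'v \<times> 'e list \<times> 'v) cat" where
  "free_cat V E src tgt =
     \<lparr> Obj = V,
       Arr = {(x, es, y). x \<in> V \<and> graph_path E src tgt x es y},
       Dom = (\<lambda>(x, es, y). x),
       Cod = (\<lambda>(x, es, y). y),
       Ident = (\<lambda>x. (x, [], x)),
       Comp = (\<lambda>(x, es, y) (y', fs, z). (x, es @ fs, z)) \<rparr>"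

lemma free_cat_simps [simp]:
  "Obj (free_cat V E src tgt) = V"
  "(x, es, y) \<in> Arr (free_cat V E src tgt) \<longleftrightarrow> x \<in> V \<and> graph_path E src tgt x es y"
  "Dom (free_cat V E src tgt) (x, es, y) = x"
  "Cod (free_cat V E src tgt) (x, es, y) = y"
  "Ident (free_cat V E src tgt) x = (x, [], x)"
  "Comp (free_cat V E src tgt) (x, es, y) (y', fs, z) = (x, es @ fs, z)"
  by (simp_all add: free_cat_def)

lemma FBr_eq_free_cat: "FBr \<Sigma> = free_cat UNIV (br_edges \<Sigma>) br_src br_tgt"
  by (simp add: FBr_def free_cat_def br_path_eq_graph_path)

lemma is_category_free_cat:
  assumes "\<forall>e\<in>E. tgt e \<in> V"
  shows "is_category (free_cat V E src tgt)"
  unfolding is_category_def free_cat_def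
  using graph_path_target_in[OF _ _ assms] by (auto simp: graph_path_append)

lemma countable_Arr_free_cat:
  assumes "countable V" "countable E" "\<forall>e\<in>E. tgt e \<in> V"
  shows "countable (Arr (free_cat V E src tgt))"
proof (rule countable_subset)
  show "Arr (free_cat V E src tgt) \<subseteq> V \<times> lists E \<times> V"
    using graph_path_edges graph_path_target_in[OF _ _ assms(3)] by (fastforce simp: free_cat_def)
  show "countable (V \<times> lists E \<times> V)"
    using assms(1,2) by simp
qed

definition path_functor ::
  "('v \<Rightarrow> 'w) \<Rightarrow> ('e \<Rightarrow> 'f) \<Rightarrow> ('v, 'v \<times> 'e list \<times> 'v, 'w, 'w \<times> 'f list \<times> 'w) cfunctor" where
  "path_functor fV fE = \<lparr> FObj = fV, FArr = (\<lambda>(x, es, y). (fV x, map fE es, fV y)) \<rparr>"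

lemma path_functor_simps [simp]:
  "FObj (path_functor fV fE) x = fV x"
  "FArr (path_functor fV fE) (x, es, y) = (fV x, map fE es, fV y)"
  by (simp_all add: path_functor_def)

lemma is_functor_path_functor:
  assumes "fV ` V \<subseteq> V'"
    and "\<forall>e\<in>E. fE e \<in> E' \<and> src' (fE e) = fV (src e) \<and> tgt' (fE e) = fV (tgt e)"
  shows "is_functor (free_cat V E src tgt) (free_cat V' E' src' tgt') (path_functor fV fE)"
  unfolding is_functor_def
  using assms graph_path_map[where E = E and fE = fE and fV = fV, OF assms(2)]
  by (auto simp: free_cat_def path_functor_def)

section \<open>Unique lifting of factorisations\<close>

lemma Ex1_prod_iff:
  "(\<exists>!(x, y). P x y) \<longleftrightarrow> (\<exists>x y. P x y) \<and> (\<forall>x y x' y'. P x y \<longrightarrow> P x' y' \<longrightarrow> (x, y) = (x', y'))"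
  by (auto simp: Ex1_def split: prod.splits) blast

lemma is_ULF_I:
  assumes lift: "\<And>\<alpha> u v. \<alpha> \<in> Arr D \<Longrightarrow> u \<in> Arr C \<Longrightarrow> v \<in> Arr C \<Longrightarrow> Cod C u = Dom C v \<Longrightarrow>
      FArr p \<alpha> = Comp C u v \<Longrightarrow>
      \<exists>\<beta> \<gamma>. \<beta> \<in> Arr D \<and> \<gamma> \<in> Arr D \<and> Cod D \<beta> = Dom D \<gamma> \<and> \<alpha> = Comp D \<beta> \<gamma> \<and>
        FArr p \<beta> = u \<and> FArr p \<gamma> = v"
    and unique: "\<And>\<beta> \<gamma> \<beta>' \<gamma>'. \<beta> \<in> Arr D \<Longrightarrow> \<gamma> \<in> Arr D \<Longrightarrow> \<beta>' \<in> Arr D \<Longrightarrow> \<gamma>' \<in> Arr D \<Longrightarrow>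
      Cod D \<beta> = Dom D \<gamma> \<Longrightarrow> Cod D \<beta>' = Dom D \<gamma>' \<Longrightarrow> Comp D \<beta> \<gamma> = Comp D \<beta>' \<gamma>' \<Longrightarrow>
      FArr p \<beta> = FArr p \<beta>' \<Longrightarrow> FArr p \<gamma> = FArr p \<gamma>' \<Longrightarrow> \<beta> = \<beta>' \<and> \<gamma> = \<gamma>'"
  shows "is_ULF D C p"
  unfolding is_ULF_def Ex1_prod_iff
proof (intro ballI impI conjI allI)
  fix \<alpha> u v
  assume "\<alpha> \<in> Arr D" "u \<in> Arr C" "v \<in> Arr C" "Cod C u = Dom C v \<and> FArr p \<alpha> = Comp C u v"
  then show "\<exists>\<beta> \<gamma>. \<beta> \<in> Arr D \<and> \<gamma> \<in> Arr D \<and> Cod D \<beta> = Dom D \<gamma> \<and> \<alpha> = Comp D \<beta> \<gamma> \<and>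
      FArr p \<beta> = u \<and> FArr p \<gamma> = v"
    using lift by blast
  show "(\<beta>, \<gamma>) = (\<beta>', \<gamma>')"
    if "\<beta> \<in> Arr D \<and> \<gamma> \<in> Arr D \<and> Cod D \<beta> = Dom D \<gamma> \<and> \<alpha> = Comp D \<beta> \<gamma> \<and>
        FArr p \<beta> = u \<and> FArr p \<gamma> = v"
      and "\<beta>' \<in> Arr D \<and> \<gamma>' \<in> Arr D \<and> Cod D \<beta>' = Dom D \<gamma>' \<and> \<alpha> = Comp D \<beta>' \<gamma>' \<and>
        FArr p \<beta>' = u \<and> FArr p \<gamma>' = v"
    for \<beta> \<gamma> \<beta>' \<gamma>'
    using that unique[of \<beta> \<gamma> \<beta>' \<gamma>'] by auto
qed

lemma is_ULF_lift:
  assumes "is_ULF D C p" "\<alpha> \<in> Arr D" "u \<in> Arr C" "v \<in> Arr C" "Cod C u = Dom C v"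
    "FArr p \<alpha> = Comp C u v"
  obtains \<beta> \<gamma> where "\<beta> \<in> Arr D" "\<gamma> \<in> Arr D" "Cod D \<beta> = Dom D \<gamma>" "\<alpha> = Comp D \<beta> \<gamma>"
    "FArr p \<beta> = u" "FArr p \<gamma> = v"
  using assms unfolding is_ULF_def Ex1_prod_iff by blast

lemma is_ULF_unique:
  assumes "is_ULF D C p" "is_functor D C p" "is_category D"
    and "\<beta> \<in> Arr D" "\<gamma> \<in> Arr D" "\<beta>' \<in> Arr D" "\<gamma>' \<in> Arr D"
    and "Cod D \<beta> = Dom D \<gamma>" "Cod D \<beta>' = Dom D \<gamma>'" "Comp D \<beta> \<gamma> = Comp D \<beta>' \<gamma>'"
    and "FArr p \<beta> = FArr p \<beta>'" "FArr p \<gamma> = FArr p \<gamma>'"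
  shows "\<beta> = \<beta>' \<and> \<gamma> = \<gamma>'"
proof -
  let ?P = "\<lambda>\<beta>1 \<gamma>1. \<beta>1 \<in> Arr D \<and> \<gamma>1 \<in> Arr D \<and> Cod D \<beta>1 = Dom D \<gamma>1 \<and>
    Comp D \<beta> \<gamma> = Comp D \<beta>1 \<gamma>1 \<and> FArr p \<beta>1 = FArr p \<beta> \<and> FArr p \<gamma>1 = FArr p \<gamma>"
  have "Comp D \<beta> \<gamma> \<in> Arr D" "FArr p \<beta> \<in> Arr C" "FArr p \<gamma> \<in> Arr C"
    "Cod C (FArr p \<beta>) = Dom C (FArr p \<gamma>)" "FArr p (Comp D \<beta> \<gamma>) = Comp C (FArr p \<beta>) (FArr p \<gamma>)"
    using assms(2-5,8) unfolding is_functor_def is_category_def by auto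
  with assms(1) have "\<forall>\<beta>1 \<gamma>1 \<beta>2 \<gamma>2. ?P \<beta>1 \<gamma>1 \<longrightarrow> ?P \<beta>2 \<gamma>2 \<longrightarrow> (\<beta>1, \<gamma>1) = (\<beta>2, \<gamma>2)"
    unfolding is_ULF_def Ex1_prod_iff by blast
  moreover have "?P \<beta> \<gamma>" "?P \<beta>' \<gamma>'"
    using assms(4-12) by auto
  ultimately show ?thesis
    by blast
qed

lemma is_ULF_path_functor:
  assumes closed: "\<forall>e\<in>E. tgt e \<in> V"
    and hom: "\<forall>e\<in>E. fE e \<in> E' \<and> src' (fE e) = fV (src e) \<and> tgt' (fE e) = fV (tgt e)"
  shows "is_ULF (free_cat V E src tgt) (free_cat V' E' src' tgt') (path_functor fV fE)"
proof (rule is_ULF_I)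
  fix \<alpha> u v
  assume "\<alpha> \<in> Arr (free_cat V E src tgt)" "u \<in> Arr (free_cat V' E' src' tgt')"
    "Cod (free_cat V' E' src' tgt') u = Dom (free_cat V' E' src' tgt') v"
    "FArr (path_functor fV fE) \<alpha> = Comp (free_cat V' E' src' tgt') u v"
  moreover obtain x es y where "\<alpha> = (x, es, y)" by (cases \<alpha>)
  moreover obtain A us B where "u = (A, us, B)" by (cases u)
  moreover obtain B' vs C where "v = (B', vs, C)" by (cases v)
  ultimately have \<alpha>: "x \<in> V" "graph_path E src tgt x es y" and u: "graph_path E' src' tgt' A us B"
    and eqs: "\<alpha> = (x, es, y)" "u = (A, us, B)" "v = (B, vs, C)" "A = fV x" "C = fV y"
    and "map fE es = us @ vs"
    by auto
  then obtain es1 es2 where es: "es = es1 @ es2" "us = map fE es1" "vs = map fE es2"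
    by (auto simp: map_eq_append_conv)
  with \<alpha> obtain m where m: "graph_path E src tgt x es1 m" "graph_path E src tgt m es2 y"
    by (auto simp: graph_path_append)
  have "m \<in> V"
    using graph_path_target_in[OF m(1) \<alpha>(1) closed] .
  moreover have "fV m = B"
    using graph_path_target_unique[OF graph_path_map[where fE = fE, OF hom m(1)]] u es(2) eqs(4)
    by simp
  ultimately show "\<exists>\<beta> \<gamma>. \<beta> \<in> Arr (free_cat V E src tgt) \<and> \<gamma> \<in> Arr (free_cat V E src tgt) \<and>
      Cod (free_cat V E src tgt) \<beta> = Dom (free_cat V E src tgt) \<gamma> \<and>
      \<alpha> = Comp (free_cat V E src tgt) \<beta> \<gamma> \<and>
      FArr (path_functor fV fE) \<beta> = u \<and> FArr (path_functor fV fE) \<gamma> = v"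
    using \<alpha> m es eqs by (intro exI[of _ "(x, es1, m)"] exI[of _ "(m, es2, y)"]) simp
next
  fix \<beta> \<gamma> \<beta>' \<gamma>'
  assume "\<beta> \<in> Arr (free_cat V E src tgt)" "\<beta>' \<in> Arr (free_cat V E src tgt)"
    "Cod (free_cat V E src tgt) \<beta> = Dom (free_cat V E src tgt) \<gamma>"
    "Cod (free_cat V E src tgt) \<beta>' = Dom (free_cat V E src tgt) \<gamma>'"
    "Comp (free_cat V E src tgt) \<beta> \<gamma> = Comp (free_cat V E src tgt) \<beta>' \<gamma>'"
    "FArr (path_functor fV fE) \<beta> = FArr (path_functor fV fE) \<beta>'"
  moreover obtain x1 es1 y1 where "\<beta> = (x1, es1, y1)" by (cases \<beta>)
  moreover obtain x2 es2 y2 where "\<gamma> = (x2, es2, y2)" by (cases \<gamma>)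
  moreover obtain x1' es1' y1' where "\<beta>' = (x1', es1', y1')" by (cases \<beta>')
  moreover obtain x2' es2' y2' where "\<gamma>' = (x2', es2', y2')" by (cases \<gamma>')
  ultimately have "graph_path E src tgt x1 es1 y1" "graph_path E src tgt x1 es1' y1'"
    and eqs: "\<beta> = (x1, es1, y1)" "\<gamma> = (y1, es2, y2)" "\<beta>' = (x1, es1', y1')" "\<gamma>' = (y1', es2', y2)"
    and "es1 @ es2 = es1' @ es2'" "length es1 = length es1'"
    by (auto dest: map_eq_imp_length_eq)
  then have "es1 = es1'" "es2 = es2'" "y1 = y1'"
    by (auto dest: graph_path_target_unique)
  with eqs show "\<beta> = \<beta>' \<and> \<gamma> = \<gamma>'"
    by simp
qed

lemma is_finitary_path_functor:
  assumes "finite V" "finite E" "\<forall>e\<in>E. tgt e \<in> V"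
  shows "is_finitary (free_cat V E src tgt) C (path_functor fV fE)"
  unfolding is_finitary_def
proof (intro conjI ballI)
  show "finite {q \<in> Obj (free_cat V E src tgt). FObj (path_functor fV fE) q = A}" for A
    using assms(1) by simp
  fix w assume "w \<in> Arr C"
  obtain A ws B where w: "w = (A, ws, B)" by (cases w)
  have "{\<alpha> \<in> Arr (free_cat V E src tgt). FArr (path_functor fV fE) \<alpha> = w}
      \<subseteq> V \<times> {es. set es \<subseteq> E \<and> length es = length ws} \<times> V"
    using graph_path_edges graph_path_target_in[OF _ _ assms(3)] w by (fastforce simp: free_cat_def)
  moreover have "finite (V \<times> {es. set es \<subseteq> E \<and> length es = length ws} \<times> V)"
    using assms(1,2) finite_lists_length_eq by blast
  ultimately show "finite {\<alpha> \<in> Arr (free_cat V E src tgt). FArr (path_functor fV fE) \<alpha> = w}"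
    by (rule finite_subset)
qed

section \<open>Renaming objects and arrows\<close>

definition relabel_cat :: "('o \<Rightarrow> 'p) \<Rightarrow> ('m \<Rightarrow> 'n) \<Rightarrow> ('o, 'm) cat \<Rightarrow> ('p, 'n) cat" where
  "relabel_cat hO hA Q =
     \<lparr> Obj = hO ` Obj Q,
       Arr = hA ` Arr Q,
       Dom = hO \<circ> Dom Q \<circ> inv_into (Arr Q) hA,
       Cod = hO \<circ> Cod Q \<circ> inv_into (Arr Q) hA,
       Ident = hA \<circ> Ident Q \<circ> inv_into (Obj Q) hO,
       Comp = (\<lambda>f g. hA (Comp Q (inv_into (Arr Q) hA f) (inv_into (Arr Q) hA g))) \<rparr>"

definition relabel_functor ::
  "('o \<Rightarrow> 'p) \<Rightarrow> ('m \<Rightarrow> 'n) \<Rightarrow> ('o, 'm) cat \<Rightarrow> ('o, 'm, 'o2, 'm2) cfunctor \<Rightarrow> ('p, 'n, 'o2, 'm2) cfunctor" where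
  "relabel_functor hO hA Q p =
     \<lparr> FObj = FObj p \<circ> inv_into (Obj Q) hO, FArr = FArr p \<circ> inv_into (Arr Q) hA \<rparr>"

context
  fixes hO :: "'o \<Rightarrow> 'p" and hA :: "'m \<Rightarrow> 'n" and Q :: "('o, 'm) cat"
  assumes inj_Obj: "inj_on hO (Obj Q)" and inj_Arr: "inj_on hA (Arr Q)"
begin

lemma relabel_simps:
  "Obj (relabel_cat hO hA Q) = hO ` Obj Q"
  "Arr (relabel_cat hO hA Q) = hA ` Arr Q"
  "\<alpha> \<in> Arr Q \<Longrightarrow> Dom (relabel_cat hO hA Q) (hA \<alpha>) = hO (Dom Q \<alpha>)"
  "\<alpha> \<in> Arr Q \<Longrightarrow> Cod (relabel_cat hO hA Q) (hA \<alpha>) = hO (Cod Q \<alpha>)"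
  "A \<in> Obj Q \<Longrightarrow> Ident (relabel_cat hO hA Q) (hO A) = hA (Ident Q A)"
  "\<beta> \<in> Arr Q \<Longrightarrow> \<gamma> \<in> Arr Q \<Longrightarrow> Comp (relabel_cat hO hA Q) (hA \<beta>) (hA \<gamma>) = hA (Comp Q \<beta> \<gamma>)"
  "A \<in> Obj Q \<Longrightarrow> FObj (relabel_functor hO hA Q p) (hO A) = FObj p A"
  "\<alpha> \<in> Arr Q \<Longrightarrow> FArr (relabel_functor hO hA Q p) (hA \<alpha>) = FArr p \<alpha>"
  using inj_Obj inj_Arr by (simp_all add: relabel_cat_def relabel_functor_def)

lemma relabel_Obj_eq_iff: "A \<in> Obj Q \<Longrightarrow> B \<in> Obj Q \<Longrightarrow> hO A = hO B \<longleftrightarrow> A = B"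
  using inj_Obj by (auto dest: inj_onD)

lemma relabel_Arr_eq_iff: "\<alpha> \<in> Arr Q \<Longrightarrow> \<beta> \<in> Arr Q \<Longrightarrow> hA \<alpha> = hA \<beta> \<longleftrightarrow> \<alpha> = \<beta>"
  using inj_Arr by (auto dest: inj_onD)

lemma is_category_relabel:
  assumes "is_category Q"
  shows "is_category (relabel_cat hO hA Q)"
  using assms unfolding is_category_def
  by (auto simp: relabel_simps relabel_Obj_eq_iff relabel_Arr_eq_iff)

lemma is_functor_relabel:
  assumes "is_category Q" "is_functor Q C p"
  shows "is_functor (relabel_cat hO hA Q) C (relabel_functor hO hA Q p)"
  using assms unfolding is_category_def is_functor_def
  by (auto simp: relabel_simps relabel_Obj_eq_iff)

lemma is_ULF_relabel:
  assumes cat: "is_category Q" and functorial: "is_functor Q C p" and ulf: "is_ULF Q C p"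
  shows "is_ULF (relabel_cat hO hA Q) C (relabel_functor hO hA Q p)"
proof (rule is_ULF_I)
  fix \<alpha>' u v
  assume "\<alpha>' \<in> Arr (relabel_cat hO hA Q)" "u \<in> Arr C" "v \<in> Arr C" "Cod C u = Dom C v"
    "FArr (relabel_functor hO hA Q p) \<alpha>' = Comp C u v"
  moreover from this(1) obtain \<alpha> where "\<alpha> \<in> Arr Q" "\<alpha>' = hA \<alpha>"
    by (auto simp: relabel_simps)
  ultimately obtain \<beta> \<gamma> where "\<beta> \<in> Arr Q" "\<gamma> \<in> Arr Q" "Cod Q \<beta> = Dom Q \<gamma>" "\<alpha> = Comp Q \<beta> \<gamma>"
    "FArr p \<beta> = u" "FArr p \<gamma> = v"
    using ulf by (auto simp: relabel_simps elim: is_ULF_lift)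
  with \<open>\<alpha>' = hA \<alpha>\<close> show "\<exists>\<beta>' \<gamma>'. \<beta>' \<in> Arr (relabel_cat hO hA Q) \<and> \<gamma>' \<in> Arr (relabel_cat hO hA Q) \<and>
      Cod (relabel_cat hO hA Q) \<beta>' = Dom (relabel_cat hO hA Q) \<gamma>' \<and>
      \<alpha>' = Comp (relabel_cat hO hA Q) \<beta>' \<gamma>' \<and>
      FArr (relabel_functor hO hA Q p) \<beta>' = u \<and> FArr (relabel_functor hO hA Q p) \<gamma>' = v"
    by (intro exI[of _ "hA \<beta>"] exI[of _ "hA \<gamma>"]) (simp add: relabel_simps)
next
  fix \<beta>' \<gamma>' \<beta>'' \<gamma>''
  assume "\<beta>' \<in> Arr (relabel_cat hO hA Q)" "\<gamma>' \<in> Arr (relabel_cat hO hA Q)"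
    "\<beta>'' \<in> Arr (relabel_cat hO hA Q)" "\<gamma>'' \<in> Arr (relabel_cat hO hA Q)"
  then obtain \<beta> \<gamma> \<beta>1 \<gamma>1 where arrs: "\<beta> \<in> Arr Q" "\<gamma> \<in> Arr Q" "\<beta>1 \<in> Arr Q" "\<gamma>1 \<in> Arr Q"
    and eqs: "\<beta>' = hA \<beta>" "\<gamma>' = hA \<gamma>" "\<beta>'' = hA \<beta>1" "\<gamma>'' = hA \<gamma>1"
    by (auto simp: relabel_simps)
  assume "Cod (relabel_cat hO hA Q) \<beta>' = Dom (relabel_cat hO hA Q) \<gamma>'"
    "Cod (relabel_cat hO hA Q) \<beta>'' = Dom (relabel_cat hO hA Q) \<gamma>''"
    "Comp (relabel_cat hO hA Q) \<beta>' \<gamma>' = Comp (relabel_cat hO hA Q) \<beta>'' \<gamma>''"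
    "FArr (relabel_functor hO hA Q p) \<beta>' = FArr (relabel_functor hO hA Q p) \<beta>''"
    "FArr (relabel_functor hO hA Q p) \<gamma>' = FArr (relabel_functor hO hA Q p) \<gamma>''"
  with arrs eqs cat have "Cod Q \<beta> = Dom Q \<gamma>" "Cod Q \<beta>1 = Dom Q \<gamma>1" "Comp Q \<beta> \<gamma> = Comp Q \<beta>1 \<gamma>1"
    "FArr p \<beta> = FArr p \<beta>1" "FArr p \<gamma> = FArr p \<gamma>1"
    unfolding is_category_def by (auto simp: relabel_simps relabel_Obj_eq_iff relabel_Arr_eq_iff)
  with is_ULF_unique[OF ulf functorial cat arrs] eqs show "\<beta>' = \<beta>'' \<and> \<gamma>' = \<gamma>''"
    by simp
qed

lemma is_finitary_relabel:
  assumes "is_finitary Q C p"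
  shows "is_finitary (relabel_cat hO hA Q) C (relabel_functor hO hA Q p)"
proof -
  have "{q \<in> Obj (relabel_cat hO hA Q). FObj (relabel_functor hO hA Q p) q = A} =
      hO ` {q \<in> Obj Q. FObj p q = A}" for A
    by (auto simp: relabel_simps)
  moreover have "{\<alpha> \<in> Arr (relabel_cat hO hA Q). FArr (relabel_functor hO hA Q p) \<alpha> = w} =
      hA ` {\<alpha> \<in> Arr Q. FArr p \<alpha> = w}" for w
    by (auto simp: relabel_simps)
  ultimately show ?thesis
    using assms unfolding is_finitary_def by simp
qed

lemma is_cat_NFA_relabel:
  assumes "is_cat_NFA C Q p q0 qf"
  shows "is_cat_NFA C (relabel_cat hO hA Q) (relabel_functor hO hA Q p) (hO q0) (hO qf)"
proof -
  have "is_category Q" "is_functor Q C p" "is_ULF Q C p" "is_finitary Q C p"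
    using assms unfolding is_cat_NFA_def by simp_all
  then show ?thesis
    using assms unfolding is_cat_NFA_def
    by (simp add: relabel_simps is_category_relabel is_functor_relabel is_ULF_relabel
        is_finitary_relabel)
qed

lemma cat_NFA_lang_relabel:
  assumes "is_category Q" "q0 \<in> Obj Q" "qf \<in> Obj Q"
  shows "cat_NFA_lang (relabel_cat hO hA Q) (relabel_functor hO hA Q p) (hO q0) (hO qf) =
    cat_NFA_lang Q p q0 qf"
proof -
  have "Dom Q \<alpha> \<in> Obj Q" "Cod Q \<alpha> \<in> Obj Q" if "\<alpha> \<in> Arr Q" for \<alpha>
    using assms(1) that unfolding is_category_def by simp_all
  with assms(2,3) show ?thesis
    unfolding cat_NFA_lang_def by (force simp: relabel_simps relabel_Obj_eq_iff)
qed

end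

lemma cat_NFA_relabel_nat:
  assumes "is_cat_NFA C Q p q0 qf" "countable (Obj Q)" "countable (Arr Q)"
  shows "\<exists>(Q' :: (nat, nat) cat) p' q0' qf'. is_cat_NFA C Q' p' q0' qf' \<and>
    cat_NFA_lang Q' p' q0' qf' = cat_NFA_lang Q p q0 qf"
proof -
  let ?hO = "to_nat_on (Obj Q)" and ?hA = "to_nat_on (Arr Q)"
  have "inj_on ?hO (Obj Q)" "inj_on ?hA (Arr Q)"
    using assms(2,3) by (simp_all add: inj_on_to_nat_on)
  moreover have "is_category Q" "q0 \<in> Obj Q" "qf \<in> Obj Q"
    using assms(1) unfolding is_cat_NFA_def by simp_all
  ultimately show ?thesis
    by (intro exI[of _ "relabel_cat ?hO ?hA Q"] exI[of _ "relabel_functor ?hO ?hA Q p"]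
        exI[of _ "?hO q0"] exI[of _ "?hO qf"])
      (simp add: is_cat_NFA_relabel[OF _ _ assms(1)] cat_NFA_lang_relabel)
qed

section \<open>From automata over the free category to classical automata\<close>

definition nfa_lang :: "('s \<times> 'a \<times> 's) set \<Rightarrow> 's set \<Rightarrow> 's set \<Rightarrow> 'a list set" where
  "nfa_lang \<delta> I F = {w. \<exists>i\<in>I. \<exists>f\<in>F. nfa_run \<delta> i w f}"

definition rename_trans :: "('s \<Rightarrow> 't) \<Rightarrow> ('s \<times> 'a \<times> 's) set \<Rightarrow> ('t \<times> 'a \<times> 't) set" where
  "rename_trans h \<delta> = (\<lambda>(x, a, y). (h x, a, h y)) ` \<delta>"

lemma nfa_run_rename_trans:
  assumes "inj_on h S" "\<delta> \<subseteq> S \<times> A \<times> S" "x \<in> S" "y \<in> S"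
  shows "nfa_run (rename_trans h \<delta>) (h x) w (h y) \<longleftrightarrow> nfa_run \<delta> x w y"
  using assms(3)
proof (induction w arbitrary: x)
  case Nil
  then show ?case
    using assms(1,4) by (auto dest: inj_onD)
next
  case (Cons a w)
  have "nfa_run (rename_trans h \<delta>) (h x) (a # w) (h y) \<longleftrightarrow>
      (\<exists>z. (x, a, z) \<in> \<delta> \<and> nfa_run (rename_trans h \<delta>) (h z) w (h y))"
    using assms(1,2) Cons.prems by (auto simp: rename_trans_def dest: inj_onD) force
  also have "\<dots> \<longleftrightarrow> nfa_run \<delta> x (a # w) y"
    using assms(2) Cons.IH by auto
  finally show ?case .
qed

lemma nfa_lang_rename_trans:
  assumes "inj_on h S" "\<delta> \<subseteq> S \<times> A \<times> S" "I \<subseteq> S" "F \<subseteq> S"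
  shows "nfa_lang (rename_trans h \<delta>) (h ` I) (h ` F) = nfa_lang \<delta> I F"
  using nfa_run_rename_trans[OF assms(1,2)] assms(3,4) unfolding nfa_lang_def by blast

lemma classical_regular_nfa_lang:
  fixes S :: "'s set"
  assumes "finite S" "finite \<delta>" "\<delta> \<subseteq> S \<times> \<Sigma> \<times> S" "I \<subseteq> S" "F \<subseteq> S"
  shows "classical_regular \<Sigma> (nfa_lang \<delta> I F)"
proof -
  let ?h = "to_nat_on S"
  have "inj_on ?h S"
    using assms(1) by (simp add: countable_finite inj_on_to_nat_on)
  moreover have "rename_trans ?h \<delta> \<subseteq> ?h ` S \<times> \<Sigma> \<times> ?h ` S"
    using assms(3) by (auto simp: rename_trans_def)
  ultimately show ?thesis
    unfolding classical_regular_def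
    using assms nfa_lang_rename_trans[of ?h S \<delta> \<Sigma> I F, symmetric]
    by (intro exI[of _ "?h ` S"] exI[of _ "rename_trans ?h \<delta>"] exI[of _ "?h ` I"] exI[of _ "?h ` F"])
      (auto simp: rename_trans_def nfa_lang_def)
qed

definition cat_nfa_states :: "('o, 'm) cat \<Rightarrow> ('o, 'm, br_node, 'a br_arrow) cfunctor \<Rightarrow> 'o set" where
  "cat_nfa_states Q p = {q \<in> Obj Q. FObj p q = BrStar}"

definition cat_nfa_trans ::
  "('o, 'm) cat \<Rightarrow> ('o, 'm, br_node, 'a br_arrow) cfunctor \<Rightarrow> ('o \<times> 'a \<times> 'o) set" where
  "cat_nfa_trans Q p =
     {(Dom Q t, a, Cod Q t) | t a. t \<in> Arr Q \<and> FArr p t = (BrStar, [BrLoop a], BrStar)}"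

definition cat_nfa_init :: "('o, 'm) cat \<Rightarrow> ('o, 'm, br_node, 'a br_arrow) cfunctor \<Rightarrow> 'o \<Rightarrow> 'o set" where
  "cat_nfa_init Q p q0 =
     {Cod Q t | t. t \<in> Arr Q \<and> FArr p t = (BrBot, [BrOpen], BrStar) \<and> Dom Q t = q0}"

definition cat_nfa_final :: "('o, 'm) cat \<Rightarrow> ('o, 'm, br_node, 'a br_arrow) cfunctor \<Rightarrow> 'o \<Rightarrow> 'o set" where
  "cat_nfa_final Q p qf =
     {Dom Q t | t. t \<in> Arr Q \<and> FArr p t = (BrStar, [BrClose], BrTop) \<and> Cod Q t = qf}"

context
  fixes \<Sigma> :: "'a set" and Q :: "('o, 'm) cat" and p :: "('o, 'm, br_node, 'a br_arrow) cfunctor"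
  assumes cat: "is_category Q" and functorial: "is_functor Q (FBr \<Sigma>) p" and ulf: "is_ULF Q (FBr \<Sigma>) p"
begin

lemma Comp_over_append:
  assumes "\<beta> \<in> Arr Q" "\<gamma> \<in> Arr Q" "Cod Q \<beta> = Dom Q \<gamma>"
    and "FArr p \<beta> = (A, es, B)" "FArr p \<gamma> = (B, fs, C)"
  shows "Comp Q \<beta> \<gamma> \<in> Arr Q" "Dom Q (Comp Q \<beta> \<gamma>) = Dom Q \<beta>" "Cod Q (Comp Q \<beta> \<gamma>) = Cod Q \<gamma>"
    and "FArr p (Comp Q \<beta> \<gamma>) = (A, es @ fs, C)"
  using assms cat functorial unfolding is_category_def is_functor_def by (auto simp: FBr_def)

lemma split_over_append:
  assumes "\<alpha> \<in> Arr Q" "FArr p \<alpha> = (A, es @ fs, C)"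
  obtains \<beta> \<gamma> B where "\<beta> \<in> Arr Q" "\<gamma> \<in> Arr Q" "Cod Q \<beta> = Dom Q \<gamma>"
    "Dom Q \<beta> = Dom Q \<alpha>" "Cod Q \<gamma> = Cod Q \<alpha>"
    "FArr p \<beta> = (A, es, B)" "FArr p \<gamma> = (B, fs, C)" "br_path \<Sigma> A es B"
proof -
  have "br_path \<Sigma> A (es @ fs) C"
    using assms functorial unfolding is_functor_def by (force simp: FBr_def)
  then obtain B where B: "br_path \<Sigma> A es B" "br_path \<Sigma> B fs C"
    by (auto simp: br_path_eq_graph_path graph_path_append)
  then have "(A, es, B) \<in> Arr (FBr \<Sigma>)" "(B, fs, C) \<in> Arr (FBr \<Sigma>)"
    "Cod (FBr \<Sigma>) (A, es, B) = Dom (FBr \<Sigma>) (B, fs, C)"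
    "FArr p \<alpha> = Comp (FBr \<Sigma>) (A, es, B) (B, fs, C)"
    using assms(2) by (simp_all add: FBr_def)
  then obtain \<beta> \<gamma> where "\<beta> \<in> Arr Q" "\<gamma> \<in> Arr Q" "Cod Q \<beta> = Dom Q \<gamma>" "\<alpha> = Comp Q \<beta> \<gamma>"
    "FArr p \<beta> = (A, es, B)" "FArr p \<gamma> = (B, fs, C)"
    using is_ULF_lift[OF ulf assms(1)] by blast
  with B(1) show ?thesis
    using that Comp_over_append by metis
qed

lemma lifts_to_final_iff:
  "(\<exists>\<gamma>\<in>Arr Q. Dom Q \<gamma> = s \<and> Cod Q \<gamma> = qf \<and> FArr p \<gamma> = (BrStar, map BrLoop w @ [BrClose], BrTop))
   \<longleftrightarrow> (\<exists>f\<in>cat_nfa_final Q p qf. nfa_run (cat_nfa_trans Q p) s w f)"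
proof (induction w arbitrary: s)
  case Nil
  then show ?case
    by (auto simp: cat_nfa_final_def)
next
  case (Cons a w)
  show ?case
  proof
    assume "\<exists>\<gamma>\<in>Arr Q. Dom Q \<gamma> = s \<and> Cod Q \<gamma> = qf \<and>
      FArr p \<gamma> = (BrStar, map BrLoop (a # w) @ [BrClose], BrTop)"
    then obtain \<gamma> where "\<gamma> \<in> Arr Q" "Dom Q \<gamma> = s" "Cod Q \<gamma> = qf"
      "FArr p \<gamma> = (BrStar, [BrLoop a] @ (map BrLoop w @ [BrClose]), BrTop)"
      by auto
    then obtain \<beta> \<gamma>' B where "\<beta> \<in> Arr Q" "\<gamma>' \<in> Arr Q" "Cod Q \<beta> = Dom Q \<gamma>'"
      "Dom Q \<beta> = s" "Cod Q \<gamma>' = qf" "FArr p \<beta> = (BrStar, [BrLoop a], B)"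
      "FArr p \<gamma>' = (B, map BrLoop w @ [BrClose], BrTop)" "br_path \<Sigma> BrStar [BrLoop a] B"
      by (metis split_over_append)
    moreover from this have "(s, a, Cod Q \<beta>) \<in> cat_nfa_trans Q p"
      by (auto simp: cat_nfa_trans_def)
    ultimately show "\<exists>f\<in>cat_nfa_final Q p qf. nfa_run (cat_nfa_trans Q p) s (a # w) f"
      using Cons.IH[of "Cod Q \<beta>"] by auto
  next
    assume "\<exists>f\<in>cat_nfa_final Q p qf. nfa_run (cat_nfa_trans Q p) s (a # w) f"
    then obtain t s' where "t \<in> Arr Q" "Dom Q t = s" "Cod Q t = s'"
      "FArr p t = (BrStar, [BrLoop a], BrStar)"
      "\<exists>f\<in>cat_nfa_final Q p qf. nfa_run (cat_nfa_trans Q p) s' w f"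
      by (auto simp: cat_nfa_trans_def)
    moreover from this(5) obtain \<gamma> where "\<gamma> \<in> Arr Q" "Dom Q \<gamma> = s'" "Cod Q \<gamma> = qf"
      "FArr p \<gamma> = (BrStar, map BrLoop w @ [BrClose], BrTop)"
      using Cons.IH by blast
    ultimately show "\<exists>\<gamma>\<in>Arr Q. Dom Q \<gamma> = s \<and> Cod Q \<gamma> = qf \<and>
        FArr p \<gamma> = (BrStar, map BrLoop (a # w) @ [BrClose], BrTop)"
      using Comp_over_append[of t \<gamma>] by (intro bexI[of _ "Comp Q t \<gamma>"]) auto
  qed
qed

lemma bracket_in_cat_NFA_lang_iff:
  "bracket w \<in> cat_NFA_lang Q p q0 qf \<longleftrightarrow>
   w \<in> nfa_lang (cat_nfa_trans Q p) (cat_nfa_init Q p q0) (cat_nfa_final Q p qf)"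
proof
  assume "bracket w \<in> cat_NFA_lang Q p q0 qf"
  then obtain \<alpha> where "\<alpha> \<in> Arr Q" "Dom Q \<alpha> = q0" "Cod Q \<alpha> = qf"
    "FArr p \<alpha> = (BrBot, [BrOpen] @ (map BrLoop w @ [BrClose]), BrTop)"
    by (auto simp: cat_NFA_lang_def bracket_def)
  then obtain \<beta> \<gamma> B where \<beta>: "\<beta> \<in> Arr Q" "Dom Q \<beta> = q0" "FArr p \<beta> = (BrBot, [BrOpen], B)"
    and \<gamma>: "\<gamma> \<in> Arr Q" "Dom Q \<gamma> = Cod Q \<beta>" "Cod Q \<gamma> = qf"
      "FArr p \<gamma> = (B, map BrLoop w @ [BrClose], BrTop)"
    and "br_path \<Sigma> BrBot [BrOpen] B"
    by (metis split_over_append)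
  then have "B = BrStar"
    by simp
  with \<beta> have "Cod Q \<beta> \<in> cat_nfa_init Q p q0"
    by (auto simp: cat_nfa_init_def)
  moreover have "\<exists>f\<in>cat_nfa_final Q p qf. nfa_run (cat_nfa_trans Q p) (Cod Q \<beta>) w f"
    using lifts_to_final_iff \<gamma> \<open>B = BrStar\<close> by blast
  ultimately show "w \<in> nfa_lang (cat_nfa_trans Q p) (cat_nfa_init Q p q0) (cat_nfa_final Q p qf)"
    by (auto simp: nfa_lang_def)
next
  assume "w \<in> nfa_lang (cat_nfa_trans Q p) (cat_nfa_init Q p q0) (cat_nfa_final Q p qf)"
  then obtain t s where "t \<in> Arr Q" "Dom Q t = q0" "Cod Q t = s" "FArr p t = (BrBot, [BrOpen], BrStar)"
    "\<exists>f\<in>cat_nfa_final Q p qf. nfa_run (cat_nfa_trans Q p) s w f"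
    by (auto simp: nfa_lang_def cat_nfa_init_def)
  moreover from this(5) obtain \<gamma> where "\<gamma> \<in> Arr Q" "Dom Q \<gamma> = s" "Cod Q \<gamma> = qf"
    "FArr p \<gamma> = (BrStar, map BrLoop w @ [BrClose], BrTop)"
    using lifts_to_final_iff by blast
  ultimately show "bracket w \<in> cat_NFA_lang Q p q0 qf"
    using Comp_over_append[of t \<gamma>] unfolding cat_NFA_lang_def bracket_def
    by (intro CollectI exI[of _ "Comp Q t \<gamma>"]) auto
qed

end

lemma classical_regular_cat_nfa:
  assumes "is_cat_NFA (FBr \<Sigma>) Q p q0 qf" "finite \<Sigma>"
  shows "classical_regular \<Sigma> (nfa_lang (cat_nfa_trans Q p) (cat_nfa_init Q p q0) (cat_nfa_final Q p qf))"
proof (rule classical_regular_nfa_lang)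
  have fin: "is_finitary Q (FBr \<Sigma>) p"
    using assms(1) by (simp add: is_cat_NFA_def)
  have over: "Dom Q t \<in> Obj Q \<and> FObj p (Dom Q t) = A \<and> Cod Q t \<in> Obj Q \<and> FObj p (Cod Q t) = B \<and>
      br_path \<Sigma> A es B" if "t \<in> Arr Q" "FArr p t = (A, es, B)" for t A es B
  proof -
    have "FArr p t \<in> Arr (FBr \<Sigma>)" "Dom (FBr \<Sigma>) (FArr p t) = FObj p (Dom Q t)"
      "Cod (FBr \<Sigma>) (FArr p t) = FObj p (Cod Q t)" "Dom Q t \<in> Obj Q" "Cod Q t \<in> Obj Q"
      using assms(1) that(1) unfolding is_cat_NFA_def is_category_def is_functor_def by auto
    then show ?thesis
      using that(2) by (simp add: FBr_def)
  qed
  show "finite (cat_nfa_states Q p)"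
    using fin by (simp add: is_finitary_def cat_nfa_states_def FBr_def)
  show trans_subset: "cat_nfa_trans Q p \<subseteq> cat_nfa_states Q p \<times> \<Sigma> \<times> cat_nfa_states Q p"
  proof
    fix x assume "x \<in> cat_nfa_trans Q p"
    then obtain t a where "t \<in> Arr Q" "FArr p t = (BrStar, [BrLoop a], BrStar)" "x = (Dom Q t, a, Cod Q t)"
      unfolding cat_nfa_trans_def by blast
    with over[OF this(1,2)] show "x \<in> cat_nfa_states Q p \<times> \<Sigma> \<times> cat_nfa_states Q p"
      by (simp add: cat_nfa_states_def br_edges_def)
  qed
  have "cat_nfa_trans Q p \<subseteq>
      (\<Union>a\<in>\<Sigma>. (\<lambda>t. (Dom Q t, a, Cod Q t)) ` {t \<in> Arr Q. FArr p t = (BrStar, [BrLoop a], BrStar)})"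
  proof
    fix x assume "x \<in> cat_nfa_trans Q p"
    moreover from this obtain t a where "t \<in> Arr Q" "FArr p t = (BrStar, [BrLoop a], BrStar)"
      "x = (Dom Q t, a, Cod Q t)"
      unfolding cat_nfa_trans_def by blast
    ultimately show "x \<in> (\<Union>a\<in>\<Sigma>. (\<lambda>t. (Dom Q t, a, Cod Q t)) `
        {t \<in> Arr Q. FArr p t = (BrStar, [BrLoop a], BrStar)})"
      using trans_subset by blast
  qed
  moreover have "finite {t \<in> Arr Q. FArr p t = (BrStar, [BrLoop a], BrStar)}" if "a \<in> \<Sigma>" for a
    using fin that by (simp add: is_finitary_def FBr_def br_edges_def)
  ultimately show "finite (cat_nfa_trans Q p)"
    using assms(2) by (meson finite_UN_I finite_imageI finite_subset)
  show "cat_nfa_init Q p q0 \<subseteq> cat_nfa_states Q p"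
    unfolding cat_nfa_init_def cat_nfa_states_def using over by blast
  show "cat_nfa_final Q p qf \<subseteq> cat_nfa_states Q p"
    unfolding cat_nfa_final_def cat_nfa_states_def using over by blast
qed

lemma bracket_inj: "inj bracket"
  by (auto simp: inj_def bracket_def inj_map_eq_map)

lemma classical_regular_if_cat_NFA:
  assumes "is_cat_NFA (FBr \<Sigma>) Q p q0 qf" "finite \<Sigma>" "cat_NFA_lang Q p q0 qf = bracket ` L"
  shows "classical_regular \<Sigma> L"
proof -
  have "is_category Q" "is_functor Q (FBr \<Sigma>) p" "is_ULF Q (FBr \<Sigma>) p"
    using assms(1) unfolding is_cat_NFA_def by simp_all
  note lang_iff = bracket_in_cat_NFA_lang_iff[OF this]
  have "w \<in> L \<longleftrightarrow> w \<in> nfa_lang (cat_nfa_trans Q p) (cat_nfa_init Q p q0) (cat_nfa_final Q p qf)"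
    for w
  proof -
    have "w \<in> L \<longleftrightarrow> bracket w \<in> cat_NFA_lang Q p q0 qf"
      unfolding assms(3) by (rule inj_image_mem_iff[OF bracket_inj, symmetric])
    also have "\<dots> \<longleftrightarrow> w \<in> nfa_lang (cat_nfa_trans Q p) (cat_nfa_init Q p q0) (cat_nfa_final Q p qf)"
      by (rule lang_iff)
    finally show ?thesis .
  qed
  then have "L = nfa_lang (cat_nfa_trans Q p) (cat_nfa_init Q p q0) (cat_nfa_final Q p qf)"
    by (rule set_eqI)
  with classical_regular_cat_nfa[OF assms(1,2)] show ?thesis
    by simp
qed

section \<open>From classical automata to automata over the free category\<close>

lemma br_path_from_BrTop: "br_path \<Sigma> BrTop es B \<Longrightarrow> es = []"
  by (cases es) (auto elim: br_src.elims)

lemma br_path_BrStar_BrTop: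
  "br_path \<Sigma> BrStar es BrTop \<Longrightarrow> \<exists>w. es = map BrLoop w @ [BrClose]"
proof (induction es)
  case (Cons e es)
  then show ?case
    by (cases e) (auto dest: br_path_from_BrTop intro: exI[of _ "_ # _"])
qed simp

lemma br_path_BrBot_BrTop:
  assumes "br_path \<Sigma> BrBot es BrTop"
  shows "\<exists>w. es = BrOpen # map BrLoop w @ [BrClose]"
proof (cases es)
  case (Cons e es')
  with assms have "e = BrOpen" "br_path \<Sigma> BrStar es' BrTop"
    by (cases e; simp)+
  with Cons show ?thesis
    using br_path_BrStar_BrTop by blast
qed (use assms in simp)

lemma cat_NFA_lang_subset_range_bracket:
  assumes "is_functor Q (FBr \<Sigma>) p" "FObj p q0 = BrBot" "FObj p qf = BrTop"
  shows "cat_NFA_lang Q p q0 qf \<subseteq> range bracket"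
proof
  fix z assume "z \<in> cat_NFA_lang Q p q0 qf"
  then obtain \<alpha> where "\<alpha> \<in> Arr Q" "Dom Q \<alpha> = q0" "Cod Q \<alpha> = qf" "z = FArr p \<alpha>"
    unfolding cat_NFA_lang_def by blast
  with assms obtain es where "z = (BrBot, es, BrTop)" "br_path \<Sigma> BrBot es BrTop"
    unfolding is_functor_def FBr_def by (cases z) auto
  then show "z \<in> range bracket"
    by (auto simp: bracket_def dest: br_path_BrBot_BrTop)
qed

lemma mem_cat_nfa_trans_free_cat:
  "(x, a, y) \<in> cat_nfa_trans (free_cat V E src tgt) (path_functor fV fE) \<longleftrightarrow>
   x \<in> V \<and> fV x = BrStar \<and> fV y = BrStar \<and> (\<exists>e\<in>E. src e = x \<and> tgt e = y \<and> fE e = BrLoop a)"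
  by (auto simp: cat_nfa_trans_def map_eq_Cons_conv) force

lemma mem_cat_nfa_init_free_cat:
  "y \<in> cat_nfa_init (free_cat V E src tgt) (path_functor fV fE) q0 \<longleftrightarrow>
   q0 \<in> V \<and> fV q0 = BrBot \<and> fV y = BrStar \<and> (\<exists>e\<in>E. src e = q0 \<and> tgt e = y \<and> fE e = BrOpen)"
  by (auto simp: cat_nfa_init_def map_eq_Cons_conv) force

lemma mem_cat_nfa_final_free_cat:
  "x \<in> cat_nfa_final (free_cat V E src tgt) (path_functor fV fE) qf \<longleftrightarrow>
   x \<in> V \<and> fV x = BrStar \<and> fV qf = BrTop \<and> (\<exists>e\<in>E. src e = x \<and> tgt e = qf \<and> fE e = BrClose)"
  by (auto simp: cat_nfa_final_def map_eq_Cons_conv) force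

datatype 's br_vertex = BotV | StarV 's | TopV

fun br_vertex_node :: "'s br_vertex \<Rightarrow> br_node" where
  "br_vertex_node BotV = BrBot"
| "br_vertex_node (StarV s) = BrStar"
| "br_vertex_node TopV = BrTop"

definition nfa_vertices :: "'s set \<Rightarrow> 's br_vertex set" where
  "nfa_vertices S = {BotV, TopV} \<union> StarV ` S"

definition nfa_edges ::
  "('s \<times> 'a \<times> 's) set \<Rightarrow> 's set \<Rightarrow> 's set \<Rightarrow> ('s br_vertex \<times> 'a br_edge \<times> 's br_vertex) set" where
  "nfa_edges \<delta> I F =
     (\<lambda>i. (BotV, BrOpen, StarV i)) ` I \<union>
     (\<lambda>(s, a, s'). (StarV s, BrLoop a, StarV s')) ` \<delta> \<union>
     (\<lambda>f. (StarV f, BrClose, TopV)) ` F"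

lemma mem_nfa_edges_iff:
  "(x, BrOpen, y) \<in> nfa_edges \<delta> I F \<longleftrightarrow> x = BotV \<and> (\<exists>i\<in>I. y = StarV i)"
  "(x, BrLoop a, y) \<in> nfa_edges \<delta> I F \<longleftrightarrow> (\<exists>s s'. x = StarV s \<and> y = StarV s' \<and> (s, a, s') \<in> \<delta>)"
  "(x, BrClose, y) \<in> nfa_edges \<delta> I F \<longleftrightarrow> y = TopV \<and> (\<exists>f\<in>F. x = StarV f)"
  by (auto simp: nfa_edges_def image_iff) force

definition nfa_cat :: "'s set \<Rightarrow> ('s \<times> 'a \<times> 's) set \<Rightarrow> 's set \<Rightarrow> 's set \<Rightarrow>
    ('s br_vertex, 's br_vertex \<times> ('s br_vertex \<times> 'a br_edge \<times> 's br_vertex) list \<times> 's br_vertex) cat" where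
  "nfa_cat S \<delta> I F = free_cat (nfa_vertices S) (nfa_edges \<delta> I F) fst (\<lambda>e. snd (snd e))"

definition nfa_functor ::
  "('s br_vertex, 's br_vertex \<times> ('s br_vertex \<times> 'a br_edge \<times> 's br_vertex) list \<times> 's br_vertex,
    br_node, 'a br_arrow) cfunctor" where
  "nfa_functor = path_functor br_vertex_node (\<lambda>e. fst (snd e))"

context
  fixes S :: "'s set" and \<delta> :: "('s \<times> 'a \<times> 's) set" and I F :: "'s set" and \<Sigma> :: "'a set"
  assumes finite_states: "finite S" and finite_trans: "finite \<delta>"
    and trans_subset: "\<delta> \<subseteq> S \<times> \<Sigma> \<times> S" and init_subset: "I \<subseteq> S" and final_subset: "F \<subseteq> S"
begin

lemma finite_nfa_vertices: "finite (nfa_vertices S)"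
  using finite_states by (simp add: nfa_vertices_def)

lemma finite_nfa_edges: "finite (nfa_edges \<delta> I F)"
  using finite_states finite_trans init_subset final_subset
  by (simp add: nfa_edges_def finite_subset)

lemma nfa_edges_closed: "\<forall>e\<in>nfa_edges \<delta> I F. snd (snd e) \<in> nfa_vertices S"
  using trans_subset init_subset final_subset by (auto simp: nfa_edges_def nfa_vertices_def)

lemma nfa_edges_over_br_edges:
  "\<forall>e\<in>nfa_edges \<delta> I F. fst (snd e) \<in> br_edges \<Sigma> \<and>
     br_src (fst (snd e)) = br_vertex_node (fst e) \<and> br_tgt (fst (snd e)) = br_vertex_node (snd (snd e))"
  using trans_subset by (auto simp: nfa_edges_def br_edges_def)

lemma is_cat_NFA_nfa_cat: "is_cat_NFA (FBr \<Sigma>) (nfa_cat S \<delta> I F) nfa_functor BotV TopV"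
  unfolding is_cat_NFA_def nfa_cat_def nfa_functor_def FBr_eq_free_cat
  using finite_nfa_vertices finite_nfa_edges nfa_edges_closed nfa_edges_over_br_edges
  by (simp add: is_category_free_cat is_functor_path_functor is_ULF_path_functor
      is_finitary_path_functor nfa_vertices_def)

lemma cat_nfa_trans_nfa_cat: "cat_nfa_trans (nfa_cat S \<delta> I F) nfa_functor = rename_trans StarV \<delta>"
proof (rule set_eqI)
  fix t :: "'s br_vertex \<times> 'a \<times> 's br_vertex"
  obtain x a y where "t = (x, a, y)"
    by (cases t)
  then show "t \<in> cat_nfa_trans (nfa_cat S \<delta> I F) nfa_functor \<longleftrightarrow> t \<in> rename_trans StarV \<delta>"
    using trans_subset
    by (auto simp: nfa_cat_def nfa_functor_def mem_cat_nfa_trans_free_cat nfa_vertices_def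
        Bex_def split_paired_Ex mem_nfa_edges_iff rename_trans_def image_iff)
qed

lemma cat_nfa_init_nfa_cat: "cat_nfa_init (nfa_cat S \<delta> I F) nfa_functor BotV = StarV ` I"
proof (rule set_eqI)
  show "y \<in> cat_nfa_init (nfa_cat S \<delta> I F) nfa_functor BotV \<longleftrightarrow> y \<in> StarV ` I" for y
    by (auto simp: nfa_cat_def nfa_functor_def mem_cat_nfa_init_free_cat nfa_vertices_def
        Bex_def split_paired_Ex mem_nfa_edges_iff)
qed

lemma cat_nfa_final_nfa_cat: "cat_nfa_final (nfa_cat S \<delta> I F) nfa_functor TopV = StarV ` F"
proof (rule set_eqI)
  show "x \<in> cat_nfa_final (nfa_cat S \<delta> I F) nfa_functor TopV \<longleftrightarrow> x \<in> StarV ` F" for x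
    using final_subset
    by (auto simp: nfa_cat_def nfa_functor_def mem_cat_nfa_final_free_cat nfa_vertices_def
        Bex_def split_paired_Ex mem_nfa_edges_iff)
qed

lemma cat_NFA_lang_nfa_cat:
  "cat_NFA_lang (nfa_cat S \<delta> I F) nfa_functor BotV TopV = bracket ` nfa_lang \<delta> I F"
proof -
  have "is_category (nfa_cat S \<delta> I F)" "is_functor (nfa_cat S \<delta> I F) (FBr \<Sigma>) nfa_functor"
    "is_ULF (nfa_cat S \<delta> I F) (FBr \<Sigma>) nfa_functor"
    using is_cat_NFA_nfa_cat unfolding is_cat_NFA_def by simp_all
  note bracket_iff = bracket_in_cat_NFA_lang_iff[OF this]
  have lang_iff: "bracket w \<in> cat_NFA_lang (nfa_cat S \<delta> I F) nfa_functor BotV TopV \<longleftrightarrow>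
      w \<in> nfa_lang \<delta> I F" for w
  proof -
    have "nfa_lang (rename_trans StarV \<delta>) (StarV ` I) (StarV ` F) = nfa_lang \<delta> I F"
      using trans_subset init_subset final_subset by (intro nfa_lang_rename_trans) (simp_all add: inj_on_def)
    then show ?thesis
      by (simp add: bracket_iff cat_nfa_trans_nfa_cat cat_nfa_init_nfa_cat cat_nfa_final_nfa_cat)
  qed
  have brackets: "cat_NFA_lang (nfa_cat S \<delta> I F) nfa_functor BotV TopV \<subseteq> range bracket"
    using \<open>is_functor (nfa_cat S \<delta> I F) (FBr \<Sigma>) nfa_functor\<close>
    by (rule cat_NFA_lang_subset_range_bracket) (simp_all add: nfa_functor_def)
  show ?thesis
  proof (intro equalityI subsetI)
    fix z assume z: "z \<in> cat_NFA_lang (nfa_cat S \<delta> I F) nfa_functor BotV TopV"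
    with brackets obtain w where "z = bracket w"
      by blast
    with z lang_iff show "z \<in> bracket ` nfa_lang \<delta> I F"
      by blast
  next
    fix z assume "z \<in> bracket ` nfa_lang \<delta> I F"
    with lang_iff show "z \<in> cat_NFA_lang (nfa_cat S \<delta> I F) nfa_functor BotV TopV"
      by blast
  qed
qed

end

lemma cat_NFA_if_classical_regular:
  assumes "classical_regular \<Sigma> L"
  shows "\<exists>(Q :: (nat, nat) cat) p q0 qf. is_cat_NFA (FBr \<Sigma>) Q p q0 qf \<and>
    cat_NFA_lang Q p q0 qf = bracket ` L"
proof -
  obtain S :: "nat set" and \<delta> I F where nfa: "finite S" "finite \<delta>" "\<delta> \<subseteq> S \<times> \<Sigma> \<times> S" "I \<subseteq> S" "F \<subseteq> S"
    and L: "L = nfa_lang \<delta> I F"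
    using assms unfolding classical_regular_def nfa_lang_def by blast
  have "countable (Obj (nfa_cat S \<delta> I F))" "countable (Arr (nfa_cat S \<delta> I F))"
    using finite_nfa_vertices[OF nfa] finite_nfa_edges[OF nfa] nfa_edges_closed[OF nfa]
    by (simp_all add: nfa_cat_def countable_finite countable_Arr_free_cat)
  with is_cat_NFA_nfa_cat[OF nfa] show ?thesis
    unfolding L cat_NFA_lang_nfa_cat[OF nfa, symmetric] by (rule cat_NFA_relabel_nat)
qed

theorem mainTheorem4:
  fixes \<Sigma> :: "'a set" and L :: "'a list set"
  assumes "finite \<Sigma>" and "L \<subseteq> lists \<Sigma>"
  shows "(classical_regular \<Sigma> L \<longleftrightarrow>
           (\<exists>(Q :: (nat, nat) cat) p q0 qf. is_cat_NFA (FBr \<Sigma>) Q p q0 qf \<and>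
              cat_NFA_lang Q p q0 qf = bracket ` L))
       \<and> (\<forall>(Q :: ('q, 'm) cat) p q0 qf. is_cat_NFA (FBr \<Sigma>) Q p q0 qf \<and>
              cat_NFA_lang Q p q0 qf = bracket ` L \<longrightarrow> classical_regular \<Sigma> L)"
proof (intro conjI iffI allI impI)
  show "\<exists>(Q :: (nat, nat) cat) p q0 qf. is_cat_NFA (FBr \<Sigma>) Q p q0 qf \<and>
      cat_NFA_lang Q p q0 qf = bracket ` L" if "classical_regular \<Sigma> L"
    using that by (rule cat_NFA_if_classical_regular)
  show "classical_regular \<Sigma> L" if "\<exists>(Q :: (nat, nat) cat) p q0 qf. is_cat_NFA (FBr \<Sigma>) Q p q0 qf \<and>
      cat_NFA_lang Q p q0 qf = bracket ` L"
  proof -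
    from that obtain Q :: "(nat, nat) cat" and p q0 qf
      where "is_cat_NFA (FBr \<Sigma>) Q p q0 qf" "cat_NFA_lang Q p q0 qf = bracket ` L"
      by blast
    from classical_regular_if_cat_NFA[OF this(1) assms(1) this(2)] show ?thesis .
  qed
  show "classical_regular \<Sigma> L" if "is_cat_NFA (FBr \<Sigma>) Q p q0 qf \<and> cat_NFA_lang Q p q0 qf = bracket ` L"
    for Q :: "('q, 'm) cat" and p q0 qf
    using classical_regular_if_cat_NFA[OF conjunct1[OF that] assms(1) conjunct2[OF that]] .
qed

end
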